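(* Let $r\in\mathbb{F}_2((x^{-1}))$, $k\in\mathbb{N}$, and $f\in\mathbb{F}_2[x]$ with $f(1)=1$. Then $p(r)_i=p(r+(1+x)^kf)_i$ for all $0\le i<k$, and $p(r)_k\ne p(r+(1+x)^kf)_k$.
   Context: $\mathbb{F}_2((x^{-1}))$ is the field of formal series $\sum_{z\in\mathbb{Z}}a_zx^z$, $a_z\in\mathbb{F}_2$, with $a_z\ne0$ for only finitely many positive $z$. The polynomial part is $[\sum a_zx^z]=\sum_{z\ge0}a_zx^z$. $S(r)=\frac{r}{x+1}$ if $[r](1)=0$ and $S(r)=\frac{xr}{x+1}$ if $[r](1)=1$. The parity sequence is $p(r)_k=[S^k(r)](1)\in\mathbb{F}_2$ for $k\in\mathbb{N}$. *)

theory Defs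
  imports "HOL-Library.Z2" "HOL-Computational_Algebra.Polynomial"
begin

text \<open>Elements of F_2((x^-1)) are represented by their coefficient functions
  int => bit (coefficient of x^z), subject to the side condition that only
  finitely many coefficients with positive index are nonzero.\<close>

type_synonym laur = "int \<Rightarrow> bit"

definition laurent :: "laur \<Rightarrow> bool" where
  "laurent r \<longleftrightarrow> finite {z. 0 < z \<and> r z \<noteq> 0}"

definition ladd :: "laur \<Rightarrow> laur \<Rightarrow> laur" where
  "ladd r s = (\<lambda>z. r z + s z)"

definition of_poly :: "bit poly \<Rightarrow> laur" where
  "of_poly p = (\<lambda>z. if 0 \<le> z then coeff p (nat z) else 0)"

definition lmulx :: "laur \<Rightarrow> laur" where
  "lmulx r = (\<lambda>z. r (z - 1))"

text \<open>Division by x+1: since 1/(x+1) = sum_{j>=1} x^-j, the coefficient of x^z of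
  r/(x+1) is the (finite) sum of the coefficients of r at indices m > z.\<close>
definition ldivx1 :: "laur \<Rightarrow> laur" where
  "ldivx1 r = (\<lambda>z. sum r {m. z < m \<and> r m \<noteq> 0})"

text \<open>[r](1): the polynomial part of r evaluated at 1.\<close>
definition polypart_at1 :: "laur \<Rightarrow> bit" where
  "polypart_at1 r = sum r {z. 0 \<le> z \<and> r z \<noteq> 0}"

definition S :: "laur \<Rightarrow> laur" where
  "S r = (if polypart_at1 r = 0 then ldivx1 r else ldivx1 (lmulx r))"

definition parity :: "laur \<Rightarrow> nat \<Rightarrow> bit" where
  "parity r k = polypart_at1 ((S ^^ k) r)"

end

theory Submission
  imports Defs
begin

text \<open>Write g = (1+x)^k f. For k > 0 we have g(1) = 0, so adding g does not change [r](1),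
  the same branch of S is taken for r and r + g, and S(r + g) = S r + (1+x)^(k-1) f' where
  f' is f or x f; in particular f'(1) = f(1) = 1. Hence the first k parity bits agree, and
  after k steps the perturbation is a polynomial taking the value 1 at 1, which flips the
  value at 1 of the polynomial part.\<close>

text \<open>Keep addition on bit as field addition: the library simp rule rewrites it into
  boolean exclusive-or, which hides the cancellations used below.\<close>
declare add_bit_eq_xor [simp del]

lemma bit_add_self [simp]: "(a :: bit) + a = 0"
  by (cases a) simp_all

definition vanishes_above :: "laur \<Rightarrow> int \<Rightarrow> bool" where
  "vanishes_above r N \<longleftrightarrow> (\<forall>z>N. r z = 0)"

lemma laurent_iff_vanishes_above: "laurent r \<longleftrightarrow> (\<exists>N. vanishes_above r N)"
proof
  assume "laurent r"
  then have fin: "finite {z. 0 < z \<and> r z \<noteq> 0}" by (simp add: laurent_def)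
  have "vanishes_above r (Max (insert 0 {z. 0 < z \<and> r z \<noteq> 0}))"
    unfolding vanishes_above_def
  proof (intro allI impI)
    fix z assume z: "z > Max (insert 0 {z. 0 < z \<and> r z \<noteq> 0})"
    then have "z \<notin> insert 0 {z. 0 < z \<and> r z \<noteq> 0}"
      using fin by (metis Max_ge finite_insert leD)
    with z show "r z = 0" using fin by auto
  qed
  then show "\<exists>N. vanishes_above r N" ..
next
  assume "\<exists>N. vanishes_above r N"
  then obtain N where "vanishes_above r N" ..
  then have "{z. 0 < z \<and> r z \<noteq> 0} \<subseteq> {0<..N}"
    by (auto simp: vanishes_above_def not_less[symmetric])
  then show "laurent r" unfolding laurent_def by (rule finite_subset) simp
qed

lemma vanishes_above_mono: "vanishes_above r N \<Longrightarrow> N \<le> M \<Longrightarrow> vanishes_above r M"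
  unfolding vanishes_above_def by auto

lemma vanishes_above_of_poly: "vanishes_above (of_poly p) (int (degree p))"
  unfolding vanishes_above_def of_poly_def by (auto intro: coeff_eq_0)

lemma vanishes_above_ladd:
  "vanishes_above r N \<Longrightarrow> vanishes_above s N \<Longrightarrow> vanishes_above (ladd r s) N"
  unfolding vanishes_above_def ladd_def by auto

lemma vanishes_above_lmulx: "vanishes_above r N \<Longrightarrow> vanishes_above (lmulx r) (N + 1)"
  unfolding vanishes_above_def lmulx_def by auto

lemma ldivx1_eq_sum: "vanishes_above r N \<Longrightarrow> ldivx1 r z = sum r {z<..N}"
  unfolding ldivx1_def
  by (rule sum.mono_neutral_left) (auto simp: vanishes_above_def not_less[symmetric])

lemma polypart_at1_eq_sum: "vanishes_above r N \<Longrightarrow> polypart_at1 r = sum r {0..N}"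
  unfolding polypart_at1_def
  by (rule sum.mono_neutral_left) (auto simp: vanishes_above_def not_less[symmetric])

lemma vanishes_above_ldivx1: "vanishes_above r N \<Longrightarrow> vanishes_above (ldivx1 r) N"
  using ldivx1_eq_sum unfolding vanishes_above_def by fastforce

lemma laurent_of_poly: "laurent (of_poly p)"
  using vanishes_above_of_poly laurent_iff_vanishes_above by blast

lemma laurent_common_bound:
  "laurent r \<Longrightarrow> laurent s \<Longrightarrow> \<exists>N. vanishes_above r N \<and> vanishes_above s N"
  unfolding laurent_iff_vanishes_above
  by (metis vanishes_above_mono max.cobounded1 max.cobounded2)

lemma laurent_lmulx: "laurent r \<Longrightarrow> laurent (lmulx r)"
  unfolding laurent_iff_vanishes_above by (metis vanishes_above_lmulx)

lemma laurent_ldivx1: "laurent r \<Longrightarrow> laurent (ldivx1 r)"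
  unfolding laurent_iff_vanishes_above by (metis vanishes_above_ldivx1)

lemma laurent_S: "laurent r \<Longrightarrow> laurent (S r)"
  unfolding S_def by (simp add: laurent_ldivx1 laurent_lmulx)

lemma ladd_lmulx_ldivx1: "laurent r \<Longrightarrow> ladd (lmulx (ldivx1 r)) (ldivx1 r) = r"
proof
  fix z
  assume "laurent r"
  then obtain N where "vanishes_above r N" by (auto simp: laurent_iff_vanishes_above)
  then have N: "vanishes_above r (max N z)" by (rule vanishes_above_mono) simp
  have "{z - 1<..max N z} = insert z {z<..max N z}" by auto
  then show "ladd (lmulx (ldivx1 r)) (ldivx1 r) z = r z"
    using ldivx1_eq_sum[OF N] by (simp add: ladd_def lmulx_def add.assoc)
qed

text \<open>Multiplication by x + 1 is injective on series bounded above: its equation determines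
  the coefficient at z - 1 from the one at z, so agreement propagates downwards from N + 1.\<close>
lemma ladd_lmulx_self_inj:
  assumes t: "vanishes_above t N" and u: "vanishes_above u N"
    and eq: "ladd (lmulx t) t = ladd (lmulx u) u"
  shows "t = u"
proof
  have step: "t (z - 1) = u (z - 1)" if "t z = u z" for z
    using fun_cong[OF eq, of z] that by (simp add: ladd_def lmulx_def)
  have below: "t (N + 1 - int n) = u (N + 1 - int n)" for n
  proof (induction n)
    case 0
    show ?case using t u by (simp add: vanishes_above_def)
  next
    case (Suc n)
    then show ?case using step[of "N + 1 - int n"] by (simp add: algebra_simps)
  qed
  fix z
  show "t z = u z"
  proof (cases "z \<le> N")
    case True
    then show ?thesis using below[of "nat (N + 1 - z)"] by simp
  next
    case False
    then show ?thesis using t u by (simp add: vanishes_above_def)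
  qed
qed

lemma ladd_of_poly: "ladd (of_poly p) (of_poly q) = of_poly (p + q)"
  by (auto simp: ladd_def of_poly_def)

lemma lmulx_of_poly: "lmulx (of_poly p) = of_poly ([:0, 1:] * p)"
proof
  fix z
  show "lmulx (of_poly p) z = of_poly ([:0, 1:] * p) z"
  proof (cases "z \<ge> 1")
    case True
    then have "nat z = Suc (nat (z - 1))" by simp
    with True show ?thesis by (simp add: of_poly_def lmulx_def coeff_pCons)
  next
    case False
    then show ?thesis by (cases "z = 0") (auto simp: of_poly_def lmulx_def coeff_pCons)
  qed
qed

lemma ldivx1_of_poly_mult: "ldivx1 (of_poly ([:1, 1:] * p)) = of_poly p"
proof -
  let ?q = "[:1, 1:] * p"
  let ?N = "max (int (degree ?q)) (int (degree p))"
  have "vanishes_above (ldivx1 (of_poly ?q)) ?N"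
    by (rule vanishes_above_ldivx1, rule vanishes_above_mono[OF vanishes_above_of_poly]) simp
  moreover have "vanishes_above (of_poly p) ?N"
    by (rule vanishes_above_mono[OF vanishes_above_of_poly]) simp
  moreover have "ladd (lmulx (of_poly p)) (of_poly p) = of_poly ?q"
    by (simp add: lmulx_of_poly ladd_of_poly algebra_simps)
  ultimately show ?thesis
    using ladd_lmulx_ldivx1[OF laurent_of_poly] by (metis ladd_lmulx_self_inj)
qed

lemma ldivx1_ladd:
  assumes "laurent r" "laurent s"
  shows "ldivx1 (ladd r s) = ladd (ldivx1 r) (ldivx1 s)"
proof
  fix z
  obtain N where r: "vanishes_above r N" and s: "vanishes_above s N"
    using laurent_common_bound[OF assms] by blast
  show "ldivx1 (ladd r s) z = ladd (ldivx1 r) (ldivx1 s) z"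
    using ldivx1_eq_sum[OF r] ldivx1_eq_sum[OF s] ldivx1_eq_sum[OF vanishes_above_ladd[OF r s]]
    by (simp add: ladd_def sum.distrib)
qed

lemma lmulx_ladd: "lmulx (ladd r s) = ladd (lmulx r) (lmulx s)"
  unfolding lmulx_def ladd_def by simp

lemma polypart_at1_ladd:
  assumes "laurent r" "laurent s"
  shows "polypart_at1 (ladd r s) = polypart_at1 r + polypart_at1 s"
proof -
  obtain N where r: "vanishes_above r N" and s: "vanishes_above s N"
    using laurent_common_bound[OF assms] by blast
  show ?thesis
    using polypart_at1_eq_sum[OF r] polypart_at1_eq_sum[OF s]
      polypart_at1_eq_sum[OF vanishes_above_ladd[OF r s]]
    by (simp add: ladd_def sum.distrib)
qed

lemma polypart_at1_of_poly: "polypart_at1 (of_poly p) = poly p 1"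
proof -
  have "polypart_at1 (of_poly p) = sum (of_poly p) (int ` {0..degree p})"
    using polypart_at1_eq_sum[OF vanishes_above_of_poly] by (simp add: image_int_atLeastAtMost)
  also have "\<dots> = sum (coeff p) {..degree p}"
    by (simp add: sum.reindex of_poly_def atLeast0AtMost)
  also have "\<dots> = poly p 1"
    by (simp only: poly_altdef power_one mult_1_right)
  finally show ?thesis .
qed

lemma S_ladd_of_poly_mult:
  assumes r: "laurent r"
  shows "S (ladd r (of_poly ([:1, 1:] * p))) =
    ladd (S r) (of_poly (if polypart_at1 r = 0 then p else [:0, 1:] * p))"
proof -
  have same_branch: "polypart_at1 (ladd r (of_poly ([:1, 1:] * p))) = polypart_at1 r"
    by (simp add: polypart_at1_ladd[OF r laurent_of_poly] polypart_at1_of_poly)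
  have x_comm: "[:0, 1:] * ([:1, 1:] * p) = [:1, 1:] * ([:0, 1:] * p)"
    by (simp only: mult.left_commute)
  show ?thesis
  proof (cases "polypart_at1 r = 0")
    case True
    then show ?thesis using same_branch
      by (simp only: S_def simp_thms if_True ldivx1_ladd[OF r laurent_of_poly] ldivx1_of_poly_mult)
  next
    case False
    then show ?thesis using same_branch
      by (simp only: S_def simp_thms if_False lmulx_ladd lmulx_of_poly x_comm ldivx1_of_poly_mult
          ldivx1_ladd[OF laurent_lmulx[OF r] laurent_of_poly])
  qed
qed

lemma parity_Suc: "parity r (Suc i) = parity (S r) i"
  by (simp only: parity_def funpow_Suc_right comp_apply)

lemma parity_ladd_of_poly_mult_pow:
  assumes "laurent r" "poly f 1 = 1" "i \<le> k"
  shows "parity (ladd r (of_poly ([:1, 1:] ^ k * f))) i = parity r i + of_bool (i = k)"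
  using assms
proof (induction k arbitrary: r f i)
  case 0
  then show ?case
    by (simp add: parity_def polypart_at1_ladd laurent_of_poly polypart_at1_of_poly)
next
  case (Suc k)
  consider "i = 0" | j where "i = Suc j" by (cases i) auto
  then show ?case
  proof cases
    case 1
    then show ?thesis using Suc.prems
      by (simp add: parity_def polypart_at1_ladd laurent_of_poly polypart_at1_of_poly)
  next
    case (2 j)
    define f' where "f' = (if polypart_at1 r = 0 then f else [:0, 1:] * f)"
    have "[:1, 1:] ^ Suc k * f = [:1, 1:] * ([:1, 1:] ^ k * f)"
      by (simp only: power_Suc mult.assoc)
    moreover have "[:0, 1:] * ([:1, 1:] ^ k * f) = [:1, 1:] ^ k * ([:0, 1:] * f)"
      by (rule mult.left_commute)
    ultimately have "S (ladd r (of_poly ([:1, 1:] ^ Suc k * f))) =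
        ladd (S r) (of_poly ([:1, 1:] ^ k * f'))"
      using S_ladd_of_poly_mult[OF \<open>laurent r\<close>, of "[:1, 1:] ^ k * f"]
      by (simp only: f'_def if_distrib[of "\<lambda>g. [:1, 1:] ^ k * g"])
    moreover have "poly f' 1 = 1" using \<open>poly f 1 = 1\<close> by (simp add: f'_def)
    ultimately show ?thesis
      using Suc.IH[OF laurent_S[OF \<open>laurent r\<close>], of f' j] Suc.prems \<open>i = Suc j\<close>
      by (simp add: parity_Suc)
  qed
qed

theorem lemma2p7:
  fixes r :: laur and k :: nat and f :: "bit poly"
  assumes "laurent r"
    and "poly f 1 = 1"
  shows "(\<forall>i<k. parity r i = parity (ladd r (of_poly ([:1, 1:] ^ k * f))) i)
     \<and> parity r k \<noteq> parity (ladd r (of_poly ([:1, 1:] ^ k * f))) k"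
  using parity_ladd_of_poly_mult_pow[OF assms] by simp

end
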